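(* Let $t$ be a positive integer, $s\ge 2$, and let $G=K(n_1,\dots,n_s)$ be a complete $s$-partite graph with $n_1\ge n_2\ge\cdots\ge n_s\ge 1$. Suppose exactly $r$ parts of $G$ have at least $2t$ vertices (so $n_1,\dots,n_r\ge 2t>n_{r+1}$), and let $\sigma_{r+1,s}=\sum_{j=r+1}^{s} n_j$. Then $$r+\left\lceil \frac{\sigma_{r+1,s}}{2t}\right\rceil\le \chi_t(G)\le r+\left\lceil \frac{\sigma_{r+1,s}}{t+1}\right\rceil.$$ Moreover both bounds are attained: for all integers $0\le r\le s$ with $s\ge 2$, the graph with $n_1=\cdots=n_r=2t+1$ and $n_{r+1}=\cdots=n_s=1$ attains the upper bound, and the graph with $n_1=\cdots=n_r=2t$ and $n_{r+1}=\cdots=n_s=t$ attains the lower bound.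
   Context: $K(n_1,\dots,n_s)$ denotes the complete $s$-partite graph whose parts have $n_1,\dots,n_s$ vertices. A map $f:V(G)\to\{1,\dots,k\}$ is a $t$-relaxed $k$-coloring if every vertex $u$ has at most $t$ neighbors $v$ with $f(v)=f(u)$; $\chi_t(G)$ is the minimum $k$ for which such a coloring exists. *)

theory Defs
  imports Complex_Main
begin

definition relaxed_coloring ::
  "'v set \<Rightarrow> ('v \<Rightarrow> 'v \<Rightarrow> bool) \<Rightarrow> nat \<Rightarrow> nat \<Rightarrow> ('v \<Rightarrow> nat) \<Rightarrow> bool" where
  "relaxed_coloring V adj t k f \<longleftrightarrow>
     (\<forall>u\<in>V. f u \<in> {1..k}) \<and>
     (\<forall>u\<in>V. card {v\<in>V. adj u v \<and> f v = f u} \<le> t)"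

definition relaxed_chromatic ::
  "'v set \<Rightarrow> ('v \<Rightarrow> 'v \<Rightarrow> bool) \<Rightarrow> nat \<Rightarrow> nat" where
  "relaxed_chromatic V adj t = (LEAST k. \<exists>f. relaxed_coloring V adj t k f)"

text \<open>Complete multipartite graph K(n_1,...,n_s), parts given by the list ns
  (0-indexed): vertex (i,j) is the j-th vertex of part i; two vertices are
  adjacent iff they lie in different parts.\<close>
definition cmp_vertices :: "nat list \<Rightarrow> (nat \<times> nat) set" where
  "cmp_vertices ns = {(i, j). i < length ns \<and> j < ns ! i}"

definition cmp_adj :: "nat \<times> nat \<Rightarrow> nat \<times> nat \<Rightarrow> bool" where
  "cmp_adj u v \<longleftrightarrow> fst u \<noteq> fst v"

definition chi_cmp :: "nat \<Rightarrow> nat list \<Rightarrow> nat" where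
  "chi_cmp t ns = relaxed_chromatic (cmp_vertices ns) cmp_adj t"

end

theory Submission
  imports Defs
begin

text \<open>Lower bounds come from weights: give each vertex of a part of size \<open>n\<close> a weight
  \<open>w n\<close> such that every colour class of a \<open>t\<close>-relaxed colouring weighs at most 1, so
  that the number of colours is at least the total weight. Since a vertex has at most \<open>t\<close>
  vertices of its colour outside its own part, a class meeting two parts has at most \<open>2t\<close>
  vertices, and at most \<open>n + t\<close> if it meets a part of size \<open>n\<close>; a class inside one part
  has at most \<open>n\<close> vertices. The weight \<open>1 / max n (2t)\<close> then has total
  \<open>r + \<sigma>/(2t)\<close>. Upper bounds give each big part its own colour and cut the remaining
  \<open>\<sigma>\<close> vertices into blocks of \<open>t + 1\<close>, one colour per block; for parts of size
  \<open>t\<close>, pairs of parts share a colour.\<close>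

lemma cmp_vertices_Sigma: "cmp_vertices ns = (SIGMA i:{..<length ns}. {..<ns ! i})"
  by (auto simp: cmp_vertices_def)

lemma finite_cmp_vertices [simp]: "finite (cmp_vertices ns)"
  by (simp add: cmp_vertices_Sigma)

lemma sum_cmp_vertices_part_weight:
  fixes w :: "nat \<Rightarrow> 'a::comm_semiring_1"
  shows "(\<Sum>v\<in>cmp_vertices ns. w (ns ! fst v)) = (\<Sum>n\<leftarrow>ns. of_nat n * w n)"
proof -
  have "(\<Sum>v\<in>cmp_vertices ns. w (ns ! fst v)) = (\<Sum>i<length ns. \<Sum>j<ns ! i. w (ns ! i))"
    unfolding cmp_vertices_Sigma by (subst sum.Sigma) (simp_all add: split_beta)
  also have "\<dots> = (\<Sum>n\<leftarrow>ns. of_nat n * w n)"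
    by (simp add: sum_list_sum_nth atLeast0LessThan)
  finally show ?thesis .
qed

lemma relaxed_coloring_cmp_iff:
  "relaxed_coloring (cmp_vertices ns) cmp_adj t k f \<longleftrightarrow>
     (\<forall>u\<in>cmp_vertices ns. f u \<in> {1..k}) \<and>
     (\<forall>u\<in>cmp_vertices ns. card {v\<in>cmp_vertices ns. fst u \<noteq> fst v \<and> f v = f u} \<le> t)"
  by (simp add: relaxed_coloring_def cmp_adj_def)

lemma relaxed_coloring_by_parts:
  "relaxed_coloring (cmp_vertices ns) cmp_adj t (length ns) (\<lambda>v. fst v + 1)"
  unfolding relaxed_coloring_cmp_iff
proof (intro conjI ballI)
  fix u assume "u \<in> cmp_vertices ns"
  then show "fst u + 1 \<in> {1..length ns}" by (auto simp: cmp_vertices_def)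
next
  fix u
  have "{v\<in>cmp_vertices ns. fst u \<noteq> fst v \<and> fst v + 1 = fst u + 1} = {}"
    by auto
  then show "card {v\<in>cmp_vertices ns. fst u \<noteq> fst v \<and> fst v + 1 = fst u + 1} \<le> t"
    by (metis card.empty le0)
qed

lemma chi_cmp_attained: "\<exists>f. relaxed_coloring (cmp_vertices ns) cmp_adj t (chi_cmp t ns) f"
  unfolding chi_cmp_def relaxed_chromatic_def
  by (rule LeastI_ex) (use relaxed_coloring_by_parts in blast)

lemma chi_cmp_le: "relaxed_coloring (cmp_vertices ns) cmp_adj t k f \<Longrightarrow> chi_cmp t ns \<le> k"
  unfolding chi_cmp_def relaxed_chromatic_def by (rule Least_le) blast

lemma sum_le_num_colours:
  fixes w :: "'v \<Rightarrow> real"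
  assumes "finite V" "f ` V \<subseteq> {1..k}"
    and "\<And>c. (\<Sum>v\<in>{v\<in>V. f v = c}. w v) \<le> 1"
  shows "(\<Sum>v\<in>V. w v) \<le> real k"
proof -
  have "(\<Sum>v\<in>V. w v) = (\<Sum>c\<in>{1..k}. \<Sum>v\<in>{v\<in>V. f v = c}. w v)"
    using sum.group[OF assms(1) finite_atLeastAtMost assms(2), of w] by simp
  also have "\<dots> \<le> (\<Sum>c\<in>{1..k}. 1)"
    by (rule sum_mono) (rule assms(3))
  finally show ?thesis by simp
qed

lemma card_colour_class_le_part_plus:
  assumes col: "relaxed_coloring (cmp_vertices ns) cmp_adj t k f" and u: "u \<in> cmp_vertices ns"
  shows "card {v\<in>cmp_vertices ns. f v = f u} \<le> ns ! fst u + t"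
proof -
  let ?P = "{v\<in>cmp_vertices ns. fst v = fst u}"
  let ?N = "{v\<in>cmp_vertices ns. fst u \<noteq> fst v \<and> f v = f u}"
  have "?P = {fst u} \<times> {..<ns ! fst u}"
    using u by (auto simp: cmp_vertices_def)
  then have "card ?P = ns ! fst u" by simp
  moreover have "card ?N \<le> t"
    using col u by (simp add: relaxed_coloring_cmp_iff)
  moreover have "card {v\<in>cmp_vertices ns. f v = f u} \<le> card (?P \<union> ?N)"
    by (rule card_mono) auto
  ultimately show ?thesis
    using card_Un_le[of ?P ?N] by linarith
qed

lemma card_colour_class_two_parts_le:
  assumes col: "relaxed_coloring (cmp_vertices ns) cmp_adj t k f"
    and uv: "u \<in> cmp_vertices ns" "v \<in> cmp_vertices ns" "f v = f u" "fst u \<noteq> fst v"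
  shows "card {w\<in>cmp_vertices ns. f w = f u} \<le> 2 * t"
proof -
  let ?N = "\<lambda>x. {w\<in>cmp_vertices ns. fst x \<noteq> fst w \<and> f w = f x}"
  have "card {w\<in>cmp_vertices ns. f w = f u} \<le> card (?N u \<union> ?N v)"
    using uv by (intro card_mono) auto
  also have "\<dots> \<le> card (?N u) + card (?N v)"
    by (rule card_Un_le)
  also have "\<dots> \<le> t + t"
    using col uv(1,2) unfolding relaxed_coloring_cmp_iff by (intro add_mono) blast+
  finally show ?thesis by simp
qed

lemma chi_cmp_ge_weight:
  fixes w :: "nat \<Rightarrow> real"
  assumes nonneg: "\<And>n. 0 \<le> w n"
    and part: "\<And>n. real n * w n \<le> 1"
    and mixed: "\<And>C :: (nat \<times> nat) set. card C \<le> 2 * t \<Longrightarrow> \<forall>u\<in>C. card C \<le> ns ! fst u + t \<Longrightarrow> (\<Sum>v\<in>C. w (ns ! fst v)) \<le> 1"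
  shows "(\<Sum>n\<leftarrow>ns. real n * w n) \<le> real (chi_cmp t ns)"
proof -
  obtain f where col: "relaxed_coloring (cmp_vertices ns) cmp_adj t (chi_cmp t ns) f"
    using chi_cmp_attained by blast
  have "(\<Sum>v\<in>cmp_vertices ns. w (ns ! fst v)) \<le> real (chi_cmp t ns)"
  proof (rule sum_le_num_colours)
    show "f ` cmp_vertices ns \<subseteq> {1..chi_cmp t ns}"
      using col by (auto simp: relaxed_coloring_def)
  next
    fix c
    let ?C = "{v\<in>cmp_vertices ns. f v = c}"
    show "(\<Sum>v\<in>?C. w (ns ! fst v)) \<le> 1"
    proof (cases "\<exists>i. \<forall>v\<in>?C. fst v = i")
      case True
      then obtain i where i: "\<forall>v\<in>?C. fst v = i" by blast
      have "?C \<subseteq> {i} \<times> {..<ns ! i}"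
        using i by (auto simp: cmp_vertices_def)
      then have "card ?C \<le> ns ! i"
        using card_mono[of "{i} \<times> {..<ns ! i}" ?C] by simp
      have "(\<Sum>v\<in>?C. w (ns ! fst v)) = real (card ?C) * w (ns ! i)"
        using i by (subst sum.cong[OF refl, of _ _ "\<lambda>_. w (ns ! i)"]) auto
      also have "\<dots> \<le> real (ns ! i) * w (ns ! i)"
        using \<open>card ?C \<le> ns ! i\<close> nonneg by (intro mult_right_mono) simp_all
      also have "\<dots> \<le> 1" by (rule part)
      finally show ?thesis .
    next
      case False
      then obtain u v where uv: "u \<in> ?C" "v \<in> ?C" "fst u \<noteq> fst v"
        by (metis (mono_tags, lifting))
      show ?thesis
      proof (rule mixed)
        show "card ?C \<le> 2 * t"
          using card_colour_class_two_parts_le[OF col, of u v] uv by auto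
        show "\<forall>x\<in>?C. card ?C \<le> ns ! fst x + t"
          using card_colour_class_le_part_plus[OF col] by auto
      qed
    qed
  qed simp
  then show ?thesis
    by (simp add: sum_cmp_vertices_part_weight)
qed

lemma chi_cmp_ge_capped_part_weight:
  assumes "t \<ge> 1"
  shows "(\<Sum>n\<leftarrow>ns. real n / real (max n (2 * t))) \<le> real (chi_cmp t ns)"
proof -
  have pos: "real (max n (2 * t)) > 0" for n
    using assms by simp
  have "(\<Sum>n\<leftarrow>ns. real n * (1 / real (max n (2 * t)))) \<le> real (chi_cmp t ns)"
  proof (rule chi_cmp_ge_weight)
    fix n
    show "real n * (1 / real (max n (2 * t))) \<le> 1"
      using pos[of n] by (simp add: field_simps)
  next
    fix C :: "(nat \<times> nat) set"
    assume "card C \<le> 2 * t"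
    have "(\<Sum>v\<in>C. 1 / real (max (ns ! fst v) (2 * t))) \<le> real (card C) * (1 / real (2 * t))"
      using assms by (intro sum_bounded_above divide_left_mono) auto
    also have "\<dots> \<le> 1"
      using \<open>card C \<le> 2 * t\<close> assms by (simp add: field_simps)
    finally show "(\<Sum>v\<in>C. 1 / real (max (ns ! fst v) (2 * t))) \<le> 1" .
  qed simp
  then show ?thesis by simp
qed

lemma chi_cmp_ge_singleton_part_weight:
  "(\<Sum>n\<leftarrow>ns. if n = 1 then 1 / real (t + 1) else real n / real (max n (2 * t + 1)))
    \<le> real (chi_cmp t ns)"
proof -
  define w where "w n = (if n = 1 then 1 / real (t + 1) else 1 / real (max n (2 * t + 1)))" for n
  have w_le: "w n \<le> 1 / real (t + 1)" for n
    unfolding w_def by (auto intro!: divide_left_mono)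
  have "(\<Sum>n\<leftarrow>ns. real n * w n) \<le> real (chi_cmp t ns)"
  proof (rule chi_cmp_ge_weight)
    fix n
    show "0 \<le> w n" by (simp add: w_def)
    show "real n * w n \<le> 1" by (simp add: w_def field_simps)
  next
    fix C :: "(nat \<times> nat) set"
    assume two: "card C \<le> 2 * t"
      and part: "\<forall>u\<in>C. card C \<le> ns ! fst u + t"
    show "(\<Sum>v\<in>C. w (ns ! fst v)) \<le> 1"
    proof (cases "\<exists>u\<in>C. ns ! fst u = 1")
      case True
      then have "card C \<le> t + 1" using part by force
      have "(\<Sum>v\<in>C. w (ns ! fst v)) \<le> real (card C) * (1 / real (t + 1))"
        by (intro sum_bounded_above w_le)
      also have "\<dots> \<le> 1"
        using \<open>card C \<le> t + 1\<close> by (simp add: field_simps)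
      finally show ?thesis .
    next
      case False
      then have "(\<Sum>v\<in>C. w (ns ! fst v)) \<le> real (card C) * (1 / real (2 * t + 1))"
        by (intro sum_bounded_above) (auto simp: w_def intro!: divide_left_mono)
      also have "\<dots> \<le> 1"
        using two by (simp add: field_simps)
      finally show ?thesis .
    qed
  qed
  moreover have "real n * w n = (if n = 1 then 1 / real (t + 1) else real n / real (max n (2 * t + 1)))" for n
    by (simp add: w_def)
  ultimately show ?thesis by simp
qed

lemma ex_labelling_small_fibres:
  assumes "finite A" "card A \<le> q * m"
  shows "\<exists>g. (\<forall>a\<in>A. g a \<in> {1..q}) \<and> (\<forall>a\<in>A. card {b\<in>A. g b = g a} \<le> m)"
proof -
  obtain h where h: "bij_betw h A {0..<card A}"
    using ex_bij_betw_finite_nat[OF assms(1)] by blast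
  define g where "g a = h a div m + 1" for a
  have "g a \<in> {1..q}" if "a \<in> A" for a
  proof -
    have "h a < card A"
      using h that by (auto simp: bij_betw_def)
    then have "h a < q * m"
      using assms(2) by linarith
    then show ?thesis
      by (simp add: g_def less_mult_imp_div_less Suc_leI)
  qed
  moreover have "card {b\<in>A. g b = g a} \<le> m" if "a \<in> A" for a
  proof -
    have "0 < card A"
      using assms(1) that card_gt_0_iff by blast
    then have "0 < m"
      using assms(2) by (cases m) auto
    let ?d = "h a div m"
    have "h ` {b\<in>A. g b = g a} \<subseteq> {?d * m..<?d * m + m}"
    proof
      fix p assume "p \<in> h ` {b\<in>A. g b = g a}"
      then have "p div m = ?d" by (auto simp: g_def)
      with div_mult_mod_eq[of p m] mod_less_divisor[OF \<open>0 < m\<close>, of p]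
      show "p \<in> {?d * m..<?d * m + m}"
        by simp
    qed
    moreover have "inj_on h {b\<in>A. g b = g a}"
      using h by (auto simp: bij_betw_def intro: inj_on_subset)
    ultimately show ?thesis
      using card_inj_on_le[of h "{b\<in>A. g b = g a}" "{?d * m..<?d * m + m}"] by simp
  qed
  ultimately show ?thesis by blast
qed

lemma relaxed_coloring_cmp_big_parts:
  assumes label: "\<And>v. v \<in> cmp_vertices ns \<Longrightarrow> r \<le> fst v \<Longrightarrow> g v \<in> {1..q}"
    and sparse: "\<And>u. u \<in> cmp_vertices ns \<Longrightarrow> r \<le> fst u \<Longrightarrow>
      card {v\<in>cmp_vertices ns. r \<le> fst v \<and> fst u \<noteq> fst v \<and> g v = g u} \<le> t"
  shows "relaxed_coloring (cmp_vertices ns) cmp_adj t (r + q)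
    (\<lambda>v. if fst v < r then fst v + 1 else r + g v)"
    (is "relaxed_coloring _ _ _ _ ?f")
  unfolding relaxed_coloring_cmp_iff
proof (intro conjI ballI)
  fix u assume u: "u \<in> cmp_vertices ns"
  then show "?f u \<in> {1..r + q}"
    using label[of u] by auto
  show "card {v\<in>cmp_vertices ns. fst u \<noteq> fst v \<and> ?f v = ?f u} \<le> t"
  proof (cases "fst u < r")
    case True
    have "?f v \<noteq> ?f u" if "v \<in> cmp_vertices ns" "fst u \<noteq> fst v" for v
      using True label[OF that(1)] that(2) by (cases "fst v < r") auto
    then have "{v\<in>cmp_vertices ns. fst u \<noteq> fst v \<and> ?f v = ?f u} = {}"
      by blast
    then show ?thesis by (metis card.empty le0)
  next
    case False
    have "g u \<ge> 1"
      using False label[OF u] by simp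
    then have "?f v = ?f u \<longleftrightarrow> r \<le> fst v \<and> g v = g u" for v
      using False by auto
    then have "{v\<in>cmp_vertices ns. fst u \<noteq> fst v \<and> ?f v = ?f u}
        = {v\<in>cmp_vertices ns. r \<le> fst v \<and> fst u \<noteq> fst v \<and> g v = g u}"
      by blast
    then show ?thesis
      using sparse[OF u] False by simp
  qed
qed

lemma ex_ceiling_divide_nat:
  assumes "0 < m"
  shows "\<exists>q. int q = \<lceil>real a / real m\<rceil> \<and> a \<le> q * m"
proof (intro exI conjI)
  have nonneg: "0 \<le> \<lceil>real a / real m\<rceil>"
    by (simp add: less_le_trans[of "-1" 0])
  then show "int (nat \<lceil>real a / real m\<rceil>) = \<lceil>real a / real m\<rceil>"
    by simp
  have "real a \<le> of_int \<lceil>real a / real m\<rceil> * real m"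
    using assms by (simp flip: pos_divide_le_eq)
  also have "\<dots> = real (nat \<lceil>real a / real m\<rceil> * m)"
    using nonneg by simp
  finally show "a \<le> nat \<lceil>real a / real m\<rceil> * m"
    by (simp only: of_nat_le_iff)
qed

lemma chi_cmp_le_blocks:
  "int (chi_cmp t ns) \<le> int r + \<lceil>real (\<Sum>j = r..<length ns. ns ! j) / real (t + 1)\<rceil>"
proof -
  define A where "A = {v\<in>cmp_vertices ns. r \<le> fst v}"
  obtain q where q: "int q = \<lceil>real (card A) / real (t + 1)\<rceil>" "card A \<le> q * (t + 1)"
    using ex_ceiling_divide_nat[of "t + 1" "card A"] by auto
  have "A = (SIGMA i:{r..<length ns}. {..<ns ! i})"
    by (auto simp: A_def cmp_vertices_def)
  then have card_A: "card A = (\<Sum>j = r..<length ns. ns ! j)"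
    by simp
  obtain g where label: "\<forall>a\<in>A. g a \<in> {1..q}"
    and fibre: "\<forall>a\<in>A. card {b\<in>A. g b = g a} \<le> t + 1"
    using ex_labelling_small_fibres[of A q "t + 1"] q(2) by (auto simp: A_def)
  have "relaxed_coloring (cmp_vertices ns) cmp_adj t (r + q)
      (\<lambda>v. if fst v < r then fst v + 1 else r + g v)"
  proof (rule relaxed_coloring_cmp_big_parts)
    show "g v \<in> {1..q}" if "v \<in> cmp_vertices ns" "r \<le> fst v" for v
      using label that unfolding A_def by blast
    fix u assume "u \<in> cmp_vertices ns" "r \<le> fst u"
    then have u: "u \<in> A" by (simp add: A_def)
    have "{v\<in>cmp_vertices ns. r \<le> fst v \<and> fst u \<noteq> fst v \<and> g v = g u}
        \<subseteq> {b\<in>A. g b = g u} - {u}"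
      by (auto simp: A_def)
    then have "card {v\<in>cmp_vertices ns. r \<le> fst v \<and> fst u \<noteq> fst v \<and> g v = g u}
        \<le> card ({b\<in>A. g b = g u} - {u})"
      by (rule card_mono[rotated]) (simp add: A_def)
    also have "\<dots> = card {b\<in>A. g b = g u} - 1"
      using u by (simp add: card_Diff_singleton A_def)
    also have "\<dots> \<le> t"
      using fibre u by fastforce
    finally show "card {v\<in>cmp_vertices ns. r \<le> fst v \<and> fst u \<noteq> fst v \<and> g v = g u} \<le> t" .
  qed
  then have "chi_cmp t ns \<le> r + q"
    by (rule chi_cmp_le)
  with q(1) show ?thesis
    unfolding card_A by linarith
qed

lemma chi_cmp_le_pairs:
  assumes small: "\<And>i. r \<le> i \<Longrightarrow> i < length ns \<Longrightarrow> ns ! i \<le> t"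
  shows "int (chi_cmp t ns) \<le> int r + \<lceil>real (length ns - r) / 2\<rceil>"
proof -
  define P where "P = {r..<length ns}"
  obtain q where q: "int q = \<lceil>real (card P) / real 2\<rceil>" "card P \<le> q * 2"
    using ex_ceiling_divide_nat[of 2 "card P"] by auto
  obtain h where label: "\<forall>i\<in>P. h i \<in> {1..q}"
    and fibre: "\<forall>i\<in>P. card {j\<in>P. h j = h i} \<le> 2"
    using ex_labelling_small_fibres[of P q 2] q(2) by (auto simp: P_def)
  have "relaxed_coloring (cmp_vertices ns) cmp_adj t (r + q)
      (\<lambda>v. if fst v < r then fst v + 1 else r + h (fst v))"
  proof (rule relaxed_coloring_cmp_big_parts)
    show "h (fst v) \<in> {1..q}" if "v \<in> cmp_vertices ns" "r \<le> fst v" for v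
      using label that by (auto simp: P_def cmp_vertices_def)
    fix u assume "u \<in> cmp_vertices ns" "r \<le> fst u"
    then have u: "fst u \<in> P" by (auto simp: P_def cmp_vertices_def)
    define Q where "Q = {j\<in>P. h j = h (fst u)} - {fst u}"
    have "finite Q" by (simp add: Q_def P_def)
    have "card Q \<le> 1"
      using fibre u by (fastforce simp: Q_def card_Diff_singleton)
    have "{v\<in>cmp_vertices ns. r \<le> fst v \<and> fst u \<noteq> fst v \<and> h (fst v) = h (fst u)}
        \<subseteq> (SIGMA i:Q. {..<ns ! i})"
      by (auto simp: Q_def P_def cmp_vertices_def)
    then have "card {v\<in>cmp_vertices ns. r \<le> fst v \<and> fst u \<noteq> fst v \<and> h (fst v) = h (fst u)}
        \<le> (\<Sum>i\<in>Q. ns ! i)"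
      using card_mono[of "SIGMA i:Q. {..<ns ! i}"] \<open>finite Q\<close> by fastforce
    also have "\<dots> \<le> card Q * t"
      using small sum_bounded_above[of Q "(!) ns" t] by (auto simp: Q_def P_def)
    also have "\<dots> \<le> t"
      using \<open>card Q \<le> 1\<close> by simp
    finally show "card {v\<in>cmp_vertices ns. r \<le> fst v \<and> fst u \<noteq> fst v \<and> h (fst v) = h (fst u)} \<le> t" .
  qed
  then have "chi_cmp t ns \<le> r + q"
    by (rule chi_cmp_le)
  with q(1) show ?thesis
    by (simp add: P_def)
qed

lemma downward_closed_eq_lessThan_card:
  fixes S :: "nat set"
  assumes "finite S" and down: "\<And>i j. j \<in> S \<Longrightarrow> i \<le> j \<Longrightarrow> i \<in> S"
  shows "S = {..<card S}"
proof (cases "S = {}")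
  case False
  then have "S = {..Max S}"
    using assms by (auto intro: Max_ge Max_in)
  then show ?thesis
    by (metis card_atMost lessThan_Suc_atMost)
qed simp

lemma int_add_ceiling_le:
  assumes "real a + x \<le> real b"
  shows "int a + \<lceil>x\<rceil> \<le> int b"
proof -
  have "\<lceil>x\<rceil> \<le> int b - int a"
    using assms by (simp add: ceiling_le_iff)
  then show ?thesis by simp
qed

lemma chi_cmp_ge_threshold:
  assumes t: "t \<ge> 1" and big: "{i. i < length ns \<and> 2 * t \<le> ns ! i} = {..<r}"
  shows "int r + \<lceil>real (\<Sum>j = r..<length ns. ns ! j) / real (2 * t)\<rceil> \<le> int (chi_cmp t ns)"
proof -
  let ?w = "\<lambda>n. real n / real (max n (2 * t))"
  have "{..<r} \<subseteq> {..<length ns}"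
    by (auto simp flip: big)
  then have r: "r \<le> length ns"
    by simp
  have "(\<Sum>n\<leftarrow>ns. ?w n) = (\<Sum>i = 0..<r. ?w (ns ! i)) + (\<Sum>i = r..<length ns. ?w (ns ! i))"
    using r by (simp add: sum_list_sum_nth sum.atLeastLessThan_concat)
  also have "(\<Sum>i = 0..<r. ?w (ns ! i)) = (\<Sum>i = 0..<r. 1)"
  proof (rule sum.cong)
    fix i assume "i \<in> {0..<r}"
    then have "2 * t \<le> ns ! i"
      using big by auto
    then show "?w (ns ! i) = 1"
      using t by simp
  qed simp
  also have "(\<Sum>i = r..<length ns. ?w (ns ! i)) = (\<Sum>i = r..<length ns. real (ns ! i) / real (2 * t))"
  proof (rule sum.cong)
    fix i assume "i \<in> {r..<length ns}"
    then have "ns ! i < 2 * t"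
      using big by (metis atLeastLessThan_iff lessThan_iff mem_Collect_eq not_le)
    then show "?w (ns ! i) = real (ns ! i) / real (2 * t)"
      by simp
  qed simp
  finally have "real r + real (\<Sum>j = r..<length ns. ns ! j) / real (2 * t) \<le> real (chi_cmp t ns)"
    using chi_cmp_ge_capped_part_weight[OF t, of ns] by (simp add: sum_divide_distrib)
  then show ?thesis
    by (rule int_add_ceiling_le)
qed

lemma sum_tail_replicate_append:
  assumes "r \<le> s"
  shows "(\<Sum>j = r..<length (replicate r a @ replicate (s - r) b).
    (replicate r a @ replicate (s - r) b) ! j) = (s - r) * b"
proof -
  have "(\<Sum>j = r..<length (replicate r a @ replicate (s - r) b).
      (replicate r a @ replicate (s - r) b) ! j) = (\<Sum>j = r..<s. b)"
    using assms by (intro sum.cong) (auto simp: nth_append)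
  then show ?thesis by simp
qed

lemma chi_cmp_big_and_singleton_parts:
  assumes t: "t \<ge> 1" and "r \<le> s"
  shows "int (chi_cmp t (replicate r (2 * t + 1) @ replicate (s - r) 1))
    = int r + \<lceil>real ((s - r) * 1) / real (t + 1)\<rceil>"
proof (rule antisym)
  let ?ns = "replicate r (2 * t + 1) @ replicate (s - r) 1"
  show "int (chi_cmp t ?ns) \<le> int r + \<lceil>real ((s - r) * 1) / real (t + 1)\<rceil>"
    using chi_cmp_le_blocks[of t ?ns r] unfolding sum_tail_replicate_append[OF \<open>r \<le> s\<close>] .
  have "real r + real ((s - r) * 1) / real (t + 1) \<le> real (chi_cmp t ?ns)"
    using chi_cmp_ge_singleton_part_weight[of t ?ns] t by (simp add: sum_list_replicate)
  then show "int r + \<lceil>real ((s - r) * 1) / real (t + 1)\<rceil> \<le> int (chi_cmp t ?ns)"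
    by (rule int_add_ceiling_le)
qed

lemma chi_cmp_big_and_half_parts:
  assumes t: "t \<ge> 1" and "r \<le> s"
  shows "int (chi_cmp t (replicate r (2 * t) @ replicate (s - r) t))
    = int r + \<lceil>real ((s - r) * t) / real (2 * t)\<rceil>"
proof (rule antisym)
  let ?ns = "replicate r (2 * t) @ replicate (s - r) t"
  have half: "real ((s - r) * t) / real (2 * t) = real (length ?ns - r) / 2"
    using t \<open>r \<le> s\<close> by simp
  show "int (chi_cmp t ?ns) \<le> int r + \<lceil>real ((s - r) * t) / real (2 * t)\<rceil>"
    unfolding half by (rule chi_cmp_le_pairs) (auto simp: nth_append)
  have "?ns ! i = (if i < r then 2 * t else t)" if "i < s" for i
    using that \<open>r \<le> s\<close> by (simp add: nth_append)
  then have "{i. i < length ?ns \<and> 2 * t \<le> ?ns ! i} = {..<r}"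
    using t \<open>r \<le> s\<close> by (auto split: if_splits)
  then have "int r + \<lceil>real (\<Sum>j = r..<length ?ns. ?ns ! j) / real (2 * t)\<rceil> \<le> int (chi_cmp t ?ns)"
    by (rule chi_cmp_ge_threshold[OF t])
  then show "int r + \<lceil>real ((s - r) * t) / real (2 * t)\<rceil> \<le> int (chi_cmp t ?ns)"
    unfolding sum_tail_replicate_append[OF \<open>r \<le> s\<close>] .
qed

theorem theorem2p4:
  fixes t :: nat
  assumes "t \<ge> 1"
  shows
   "(\<forall>(ns :: nat list) r.
       length ns \<ge> 2 \<and>
       (\<forall>i j. i \<le> j \<and> j < length ns \<longrightarrow> ns ! j \<le> ns ! i) \<and>
       (\<forall>i < length ns. ns ! i \<ge> 1) \<and>
       r = card {i. i < length ns \<and> ns ! i \<ge> 2 * t}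
     \<longrightarrow>
       int r + \<lceil>real (\<Sum>j = r..<length ns. ns ! j) / real (2 * t)\<rceil> \<le> int (chi_cmp t ns) \<and>
       int (chi_cmp t ns) \<le> int r + \<lceil>real (\<Sum>j = r..<length ns. ns ! j) / real (t + 1)\<rceil>)
    \<and>
    (\<forall>(s :: nat) r. s \<ge> 2 \<and> r \<le> s \<longrightarrow>
       int (chi_cmp t (replicate r (2 * t + 1) @ replicate (s - r) 1))
         = int r + \<lceil>real ((s - r) * 1) / real (t + 1)\<rceil>)
    \<and>
    (\<forall>(s :: nat) r. s \<ge> 2 \<and> r \<le> s \<longrightarrow>
       int (chi_cmp t (replicate r (2 * t) @ replicate (s - r) t))
         = int r + \<lceil>real ((s - r) * t) / real (2 * t)\<rceil>)"
proof (intro conjI allI impI; elim conjE)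
  fix ns :: "nat list" and r
  assume sorted: "\<forall>i j. i \<le> j \<and> j < length ns \<longrightarrow> ns ! j \<le> ns ! i"
    and r: "r = card {i. i < length ns \<and> ns ! i \<ge> 2 * t}"
  have "{i. i < length ns \<and> 2 * t \<le> ns ! i} = {..<r}"
    unfolding r by (rule downward_closed_eq_lessThan_card) (use sorted in \<open>auto intro: le_trans\<close>)
  then show "int r + \<lceil>real (\<Sum>j = r..<length ns. ns ! j) / real (2 * t)\<rceil> \<le> int (chi_cmp t ns)"
    by (rule chi_cmp_ge_threshold[OF assms])
  show "int (chi_cmp t ns) \<le> int r + \<lceil>real (\<Sum>j = r..<length ns. ns ! j) / real (t + 1)\<rceil>"
    by (rule chi_cmp_le_blocks)
next
  fix s r :: nat
  assume "r \<le> s"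
  then show "int (chi_cmp t (replicate r (2 * t + 1) @ replicate (s - r) 1))
      = int r + \<lceil>real ((s - r) * 1) / real (t + 1)\<rceil>"
    by (rule chi_cmp_big_and_singleton_parts[OF assms])
next
  fix s r :: nat
  assume "r \<le> s"
  then show "int (chi_cmp t (replicate r (2 * t) @ replicate (s - r) t))
      = int r + \<lceil>real ((s - r) * t) / real (2 * t)\<rceil>"
    by (rule chi_cmp_big_and_half_parts[OF assms])
qed

end
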